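(* Let $\widetilde Y\in\mathbb{R}^{m\times N}$ have nonzero columns $\widetilde Y_1,\dots,\widetilde Y_N$ and let $\widetilde w\in\mathbb{R}^N$ be a deterministic vector (e.g. obtained from a data-alignment step that does not use the quantizer randomness). Run Phase II with the infinite alphabet $\mathcal A_\infty^\delta$: $\widetilde u_0=0$ and for $t=1,\dots,N$, $\widetilde q_t=\mathcal{Q}_{\mathrm{StocQ}}\bigl(\widetilde w_t+\langle\widetilde Y_t,\widetilde u_{t-1}\rangle/\|\widetilde Y_t\|_2^2\bigr)$, $\widetilde u_t=\widetilde u_{t-1}+(\widetilde w_t-\widetilde q_t)\widetilde Y_t$, so that $\widetilde u_N=\widetilde Y(\widetilde w-\widetilde q)$. Then for every $p\in\mathbb N$, $$\|\widetilde u_N\|_2\le \delta\sqrt{2\pi p m\log N}\,\max_{1\le j\le N}\|\widetilde Y_j\|_2$$ holds with probability at least $1-\sqrt2\, m/N^{p}$.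
   Context: $\mathcal A_\infty^\delta=\{k\delta:k\in\mathbb Z\}$ with $\delta>0$. The stochastic quantizer $\mathcal{Q}_{\mathrm{StocQ}}:\mathbb R\to\mathcal A_\infty^\delta$ returns $\lfloor z/\delta\rfloor\delta$ with probability $1-z/\delta+\lfloor z/\delta\rfloor$ and $(\lfloor z/\delta\rfloor+1)\delta$ otherwise (so $\mathbb E\,\mathcal{Q}_{\mathrm{StocQ}}(z)=z$); each call uses fresh randomness, independent of everything else given its argument. *)

theory Defs
  imports "HOL-Analysis.Analysis" "HOL-Probability.Probability"
begin

definition stocQ :: "real \<Rightarrow> real \<Rightarrow> real pmf" where
  "stocQ \<delta> z = map_pmf
     (\<lambda>b. if b then (of_int \<lfloor>z / \<delta>\<rfloor> + 1) * \<delta> else of_int \<lfloor>z / \<delta>\<rfloor> * \<delta>)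
     (bernoulli_pmf (z / \<delta> - of_int \<lfloor>z / \<delta>\<rfloor>))"

text \<open>Each step uses fresh randomness
  (bind of pmfs), independent of everything else given its argument.\<close>
fun phase2 :: "real \<Rightarrow> (nat \<Rightarrow> real ^ 'm) \<Rightarrow> (nat \<Rightarrow> real) \<Rightarrow> nat \<Rightarrow> (real ^ 'm) pmf" where
  "phase2 \<delta> Y w 0 = return_pmf 0"
| "phase2 \<delta> Y w (Suc t) =
     bind_pmf (phase2 \<delta> Y w t) (\<lambda>u.
       map_pmf (\<lambda>q. u + (w (Suc t) - q) *\<^sub>R Y (Suc t))
         (stocQ \<delta> (w (Suc t) + (Y (Suc t) \<bullet> u) / (norm (Y (Suc t)))\<^sup>2)))"

end

theory Submission
  imports Defs
begin

text \<open>Conditionally on the past, the error q_t - z_t of the stochastic quantizer is centred and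
  confined to an interval of length \<delta>, so by Hoeffding's lemma it is sub-Gaussian with variance
  proxy \<delta>^2/4. Since the quantizer's argument z_t already contains the component of u_(t-1) along
  Y_t, the state u_t is, by induction, a sub-Gaussian vector with variance proxy
  \<delta>^2 max_j |Y_j|^2 / 4. A Chernoff bound in each of the m coordinate directions and a union bound
  then give the estimate, with room to spare: the failure probability is even 2 m N^(-4 \<pi> p).\<close>

lemma Hoeffdings_lemma_pmf:
  fixes p :: "real pmf"
  assumes "set_pmf p \<subseteq> {a..b}"
  shows "(\<integral>\<^sup>+x. exp (s * (x - measure_pmf.expectation p (\<lambda>x. x))) \<partial>p) \<le> exp (s\<^sup>2 * (b - a)\<^sup>2 / 8)"
proof -
  have bounded: "interval_bounded_random_variable (measure_pmf p) f c d"
    if "\<And>x. x \<in> {a..b} \<Longrightarrow> f x \<in> {c..d}" for f :: "real \<Rightarrow> real" and c d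
    using assms that by unfold_locales (auto simp: AE_measure_pmf_iff)
  consider "s > 0" | "s = 0" | "s < 0" by linarith
  then show ?thesis
  proof cases
    case 1
    show ?thesis
      using interval_bounded_random_variable.Hoeffdings_lemma_nn_integral[OF bounded 1, of "\<lambda>x. x" a b]
      by simp
  next
    case 2
    then show ?thesis by (simp add: measure_pmf.emeasure_space_1)
  next
    case 3
    have "(\<integral>\<^sup>+x. exp (- s * (- x - measure_pmf.expectation p (\<lambda>x. - x))) \<partial>p) \<le> exp ((- s)\<^sup>2 * (- a - (- b))\<^sup>2 / 8)"
      using 3 by (intro interval_bounded_random_variable.Hoeffdings_lemma_nn_integral bounded) auto
    then show ?thesis by (simp add: algebra_simps power2_commute)
  qed
qed

lemma set_pmf_stocQ:
  assumes "\<delta> > 0"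
  shows "set_pmf (stocQ \<delta> z) \<subseteq> {of_int \<lfloor>z / \<delta>\<rfloor> * \<delta> .. of_int \<lfloor>z / \<delta>\<rfloor> * \<delta> + \<delta>}"
  using assms by (auto simp: stocQ_def algebra_simps)

lemma expectation_stocQ:
  assumes "\<delta> > 0"
  shows "measure_pmf.expectation (stocQ \<delta> z) (\<lambda>q. q) = z"
proof -
  have "0 \<le> z / \<delta> - of_int \<lfloor>z / \<delta>\<rfloor>" "z / \<delta> - of_int \<lfloor>z / \<delta>\<rfloor> \<le> 1"
    by linarith+
  then show ?thesis
    using assms by (simp add: stocQ_def field_simps)
qed

lemma nn_integral_exp_stocQ_le:
  assumes "\<delta> > 0"
  shows "(\<integral>\<^sup>+q. exp (s * (q - z)) \<partial>stocQ \<delta> z) \<le> exp (s\<^sup>2 * \<delta>\<^sup>2 / 8)"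
  using Hoeffdings_lemma_pmf[OF set_pmf_stocQ[OF assms], of z s]
  by (simp add: expectation_stocQ[OF assms])

definition subgaussian_pmf :: "'a::real_inner pmf \<Rightarrow> real \<Rightarrow> bool" where
  "subgaussian_pmf p \<sigma> \<longleftrightarrow> (\<forall>v. (\<integral>\<^sup>+u. exp (v \<bullet> u) \<partial>p) \<le> exp (\<sigma>\<^sup>2 * (norm v)\<^sup>2 / 2))"

lemma subgaussian_pmf_stocQ_step:
  fixes P :: "'a::real_inner pmf" and y :: 'a
  assumes "subgaussian_pmf P \<sigma>" and "\<delta> > 0" and "y \<noteq> 0" and "\<delta> * norm y \<le> 2 * \<sigma>"
  shows "subgaussian_pmf
           (bind_pmf P (\<lambda>u. map_pmf (\<lambda>q. u + (c - q) *\<^sub>R y) (stocQ \<delta> (c + (y \<bullet> u) / (norm y)\<^sup>2))))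
           \<sigma>"
  unfolding subgaussian_pmf_def
proof
  fix v :: 'a
  define \<alpha> where "\<alpha> = v \<bullet> y"
  \<comment> \<open>The new state is the projection of u orthogonal to y plus (z u - q) y, so only the
    projection v' of v orthogonal to y sees the old state.\<close>
  define v' where "v' = v - (\<alpha> / (norm y)\<^sup>2) *\<^sub>R y"
  define z where "z = (\<lambda>u. c + (y \<bullet> u) / (norm y)\<^sup>2)"
  have ny: "(norm y)\<^sup>2 > 0"
    using assms(3) by simp
  have split: "v \<bullet> (u + (c - q) *\<^sub>R y) = v' \<bullet> u + (- \<alpha>) * (q - z u)" for u q
    using ny by (simp add: v'_def z_def \<alpha>_def inner_add_right inner_diff_left algebra_simps inner_commute)
  have norm_v': "(norm v')\<^sup>2 = (norm v)\<^sup>2 - \<alpha>\<^sup>2 / (norm y)\<^sup>2"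
    using ny unfolding v'_def \<alpha>_def power2_norm_eq_inner
    by (simp add: inner_diff_left inner_diff_right inner_commute power2_eq_square field_simps)
  have step: "(\<integral>\<^sup>+q. exp (v \<bullet> (u + (c - q) *\<^sub>R y)) \<partial>stocQ \<delta> (z u))
      \<le> ennreal (exp (v' \<bullet> u)) * exp (\<alpha>\<^sup>2 * \<delta>\<^sup>2 / 8)" for u
  proof -
    have "(\<integral>\<^sup>+q. exp (v \<bullet> (u + (c - q) *\<^sub>R y)) \<partial>stocQ \<delta> (z u))
        = ennreal (exp (v' \<bullet> u)) * (\<integral>\<^sup>+q. exp (- \<alpha> * (q - z u)) \<partial>stocQ \<delta> (z u))"
      unfolding split exp_add by (simp add: ennreal_mult nn_integral_cmult)
    also have "\<dots> \<le> ennreal (exp (v' \<bullet> u)) * exp ((- \<alpha>)\<^sup>2 * \<delta>\<^sup>2 / 8)"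
      by (intro mult_left_mono nn_integral_exp_stocQ_le assms(2)) simp
    finally show ?thesis by simp
  qed
  have "(\<integral>\<^sup>+u. exp (v \<bullet> u) \<partial>bind_pmf P (\<lambda>u. map_pmf (\<lambda>q. u + (c - q) *\<^sub>R y) (stocQ \<delta> (z u))))
      = (\<integral>\<^sup>+u. (\<integral>\<^sup>+q. exp (v \<bullet> (u + (c - q) *\<^sub>R y)) \<partial>stocQ \<delta> (z u)) \<partial>P)"
    by simp
  also have "\<dots> \<le> (\<integral>\<^sup>+u. ennreal (exp (v' \<bullet> u)) * exp (\<alpha>\<^sup>2 * \<delta>\<^sup>2 / 8) \<partial>P)"
    by (intro nn_integral_mono step)
  also have "\<dots> = (\<integral>\<^sup>+u. exp (v' \<bullet> u) \<partial>P) * ennreal (exp (\<alpha>\<^sup>2 * \<delta>\<^sup>2 / 8))"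
    by (simp add: nn_integral_multc)
  also have "\<dots> \<le> ennreal (exp (\<sigma>\<^sup>2 * (norm v')\<^sup>2 / 2)) * exp (\<alpha>\<^sup>2 * \<delta>\<^sup>2 / 8)"
    using assms(1) unfolding subgaussian_pmf_def by (intro mult_right_mono) auto
  also have "\<dots> \<le> exp (\<sigma>\<^sup>2 * (norm v)\<^sup>2 / 2)"
  proof -
    have "(\<delta> * norm y)\<^sup>2 \<le> (2 * \<sigma>)\<^sup>2"
      using assms(2,4) by (intro power_mono) auto
    then have "\<alpha>\<^sup>2 * (\<delta> * norm y)\<^sup>2 \<le> \<alpha>\<^sup>2 * (2 * \<sigma>)\<^sup>2"
      by (rule mult_left_mono) simp
    then have "\<alpha>\<^sup>2 * \<delta>\<^sup>2 / 8 \<le> \<sigma>\<^sup>2 * (\<alpha>\<^sup>2 / (norm y)\<^sup>2) / 2"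
      using ny by (simp add: power_mult_distrib field_simps)
    then show ?thesis
      by (simp add: norm_v' flip: ennreal_mult exp_add) (simp add: algebra_simps)
  qed
  finally show "(\<integral>\<^sup>+u. exp (v \<bullet> u) \<partial>bind_pmf P (\<lambda>u. map_pmf (\<lambda>q. u + (c - q) *\<^sub>R y) (stocQ \<delta> (c + (y \<bullet> u) / (norm y)\<^sup>2))))
      \<le> exp (\<sigma>\<^sup>2 * (norm v)\<^sup>2 / 2)"
    unfolding z_def .
qed

lemma subgaussian_phase2:
  assumes "\<delta> > 0" and "\<And>j. j \<in> {1..t} \<Longrightarrow> Y j \<noteq> 0" and "\<And>j. j \<in> {1..t} \<Longrightarrow> norm (Y j) \<le> K"
  shows "subgaussian_pmf (phase2 \<delta> Y w t) (\<delta> * K / 2)"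
  using assms(2,3)
proof (induction t)
  case 0
  show ?case
    by (simp add: subgaussian_pmf_def)
next
  case (Suc t)
  have "\<delta> * norm (Y (Suc t)) \<le> 2 * (\<delta> * K / 2)"
    using Suc.prems(2)[of "Suc t"] assms(1) by simp
  then show ?case
    unfolding phase2.simps using Suc by (intro subgaussian_pmf_stocQ_step assms(1)) auto
qed

lemma subgaussian_pmf_prob_inner_ge:
  assumes "subgaussian_pmf p \<sigma>"
  shows "measure_pmf.prob p {u. b \<le> v \<bullet> u} \<le> exp (\<sigma>\<^sup>2 * (norm v)\<^sup>2 / 2 - b)"
proof -
  have "emeasure (measure_pmf p) {u. b \<le> v \<bullet> u}
      \<le> ennreal (exp (- b)) * (\<integral>\<^sup>+u. exp (v \<bullet> u) \<partial>p)"
    using Chernoff_ineq_nn_integral_ge[of 1 UNIV "measure_pmf p" "\<lambda>u. v \<bullet> u" b] by simp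
  also have "\<dots> \<le> ennreal (exp (- b)) * exp (\<sigma>\<^sup>2 * (norm v)\<^sup>2 / 2)"
    using assms unfolding subgaussian_pmf_def by (intro mult_left_mono) auto
  also have "\<dots> = ennreal (exp (\<sigma>\<^sup>2 * (norm v)\<^sup>2 / 2 - b))"
    by (simp add: mult_exp_exp flip: ennreal_mult)
  finally show ?thesis
    by (simp add: measure_pmf.emeasure_eq_measure)
qed

lemma subgaussian_pmf_prob_abs_component_ge:
  fixes p :: "(real ^ 'n) pmf"
  assumes "subgaussian_pmf p \<sigma>" and "\<sigma> \<noteq> 0" and "a > 0"
  shows "measure_pmf.prob p {u. a \<le> \<bar>u $ i\<bar>} \<le> 2 * exp (- a\<^sup>2 / (2 * \<sigma>\<^sup>2))"
proof -
  define s where "s = a / \<sigma>\<^sup>2"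
  have s: "s > 0"
    using assms(2,3) by (simp add: s_def)
  have tail: "measure_pmf.prob p {u. a \<le> c * u $ i} \<le> exp (- a\<^sup>2 / (2 * \<sigma>\<^sup>2))"
    if "\<bar>c\<bar> = 1" for c
  proof -
    have "\<sigma>\<^sup>2 * (norm ((c * s) *\<^sub>R axis i (1::real)))\<^sup>2 / 2 - s * a = - a\<^sup>2 / (2 * \<sigma>\<^sup>2)"
      using that assms(2) by (simp add: s_def abs_mult power_mult_distrib power2_eq_square field_simps)
    moreover have "{u. a \<le> c * u $ i} = {u. s * a \<le> ((c * s) *\<^sub>R axis i 1) \<bullet> u}"
      using s by (auto simp: inner_axis' mult.commute mult.left_commute)
    ultimately show ?thesis
      using subgaussian_pmf_prob_inner_ge[OF assms(1), of "s * a" "(c * s) *\<^sub>R axis i 1"] by simp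
  qed
  have "{u. a \<le> \<bar>u $ i\<bar>} = {u. a \<le> 1 * u $ i} \<union> {u. a \<le> - 1 * u $ i}"
    by (auto simp: abs_real_def)
  then have "measure_pmf.prob p {u. a \<le> \<bar>u $ i\<bar>}
      \<le> measure_pmf.prob p {u. a \<le> 1 * u $ i} + measure_pmf.prob p {u. a \<le> - 1 * u $ i}"
    by (simp add: measure_Un_le)
  then show ?thesis
    using tail[of 1] tail[of "- 1"] by simp
qed

lemma subgaussian_pmf_prob_norm_le:
  fixes p :: "(real ^ 'n) pmf"
  assumes "subgaussian_pmf p \<sigma>" and "\<sigma> \<noteq> 0" and "a > 0"
  shows "measure_pmf.prob p {u. norm u \<le> sqrt CARD('n) * a}
           \<ge> 1 - 2 * real CARD('n) * exp (- a\<^sup>2 / (2 * \<sigma>\<^sup>2))"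
proof -
  let ?P = "measure_pmf.prob p"
  let ?S = "{u :: real ^ 'n. norm u \<le> sqrt CARD('n) * a}"
  have norm_le: "norm u \<le> sqrt CARD('n) * a" if "\<And>i. \<bar>u $ i\<bar> \<le> a" for u :: "real ^ 'n"
  proof -
    have "norm u \<le> L2_set (\<lambda>i. a) (UNIV :: 'n set)"
      unfolding norm_vec_def using that by (intro L2_set_mono) auto
    then show ?thesis
      using assms(3) by (simp add: L2_set_constant)
  qed
  have "- ?S \<subseteq> (\<Union>i. {u. a \<le> \<bar>u $ i\<bar>})"
  proof
    fix u
    assume "u \<in> - ?S"
    then obtain i where "a < \<bar>u $ i\<bar>"
      using norm_le by (meson ComplD mem_Collect_eq not_le)
    then show "u \<in> (\<Union>i. {u. a \<le> \<bar>u $ i\<bar>})"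
      by (auto intro: less_imp_le)
  qed
  then have "?P (- ?S) \<le> ?P (\<Union>i. {u. a \<le> \<bar>u $ i\<bar>})"
    by (intro measure_pmf.finite_measure_mono) simp_all
  also have "\<dots> \<le> (\<Sum>i\<in>UNIV. ?P {u. a \<le> \<bar>u $ i\<bar>})"
    by (rule measure_pmf.finite_measure_subadditive_finite) simp_all
  also have "\<dots> \<le> (\<Sum>i\<in>(UNIV :: 'n set). 2 * exp (- a\<^sup>2 / (2 * \<sigma>\<^sup>2)))"
    by (intro sum_mono subgaussian_pmf_prob_abs_component_ge assms)
  finally show ?thesis
    using measure_pmf.prob_compl[of ?S p] by (simp add: Compl_eq_Diff_UNIV)
qed

lemma prob_phase2_norm_le:
  fixes Y :: "nat \<Rightarrow> real ^ 'm" and \<eta> :: real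
  assumes "\<delta> > 0" and "K > 0" and "\<eta> > 0"
    and "\<And>j. j \<in> {1..t} \<Longrightarrow> Y j \<noteq> 0" and "\<And>j. j \<in> {1..t} \<Longrightarrow> norm (Y j) \<le> K"
  shows "measure_pmf.prob (phase2 \<delta> Y w t) {u. norm u \<le> \<delta> * sqrt (\<eta> * CARD('m) / 2) * K}
           \<ge> 1 - 2 * real CARD('m) * exp (- \<eta>)"
proof -
  define a where "a = \<delta> * K * sqrt (\<eta> / 2)"
  have "a > 0"
    using assms(1-3) by (simp add: a_def)
  moreover have "a\<^sup>2 / (2 * (\<delta> * K / 2)\<^sup>2) = \<eta>"
    using assms(1-3) by (simp add: a_def power_mult_distrib real_sqrt_pow2 field_simps)
  moreover have "sqrt CARD('m) * a = \<delta> * sqrt (\<eta> * CARD('m) / 2) * K"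
    using assms(3) by (simp add: a_def real_sqrt_mult real_sqrt_divide ac_simps)
  ultimately show ?thesis
    using subgaussian_pmf_prob_norm_le[OF subgaussian_phase2[OF assms(1,4,5)], where a = a] assms(1,2)
    by simp
qed

lemma two_exp_neg_four_pi_ln_le:
  fixes x :: real
  assumes "x \<ge> 2"
  shows "2 * exp (- (4 * pi * ln x)) \<le> sqrt 2 / x"
proof -
  have "ln x > 0"
    using assms by simp
  then have "exp (- (4 * pi * ln x)) \<le> exp (- (2 * ln x))"
    using pi_ge_two by simp
  also have "\<dots> = 1 / x\<^sup>2"
    using assms by (simp add: exp_minus inverse_eq_divide exp_of_nat_mult[of 2, simplified])
  also have "\<dots> \<le> 1 / (2 * x)"
    using assms by (simp add: power2_eq_square frac_le)
  finally have "2 * exp (- (4 * pi * ln x)) \<le> 1 / x"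
    using assms by simp
  also have "\<dots> \<le> sqrt 2 / x"
    using assms by (simp add: divide_right_mono)
  finally show ?thesis .
qed

theorem mainTheorem2:
  fixes Y :: "nat \<Rightarrow> real ^ 'm" and w :: "nat \<Rightarrow> real"
    and \<delta> :: real and N p :: nat
  assumes "\<delta> > 0" and "N \<ge> 1"
    and "\<And>j. j \<in> {1..N} \<Longrightarrow> Y j \<noteq> 0"
  shows "measure_pmf.prob (phase2 \<delta> Y w N)
           {u. norm u \<le> \<delta> * sqrt (2 * pi * real p * real CARD('m) * ln (real N))
                          * (MAX j\<in>{1..N}. norm (Y j))}
         \<ge> 1 - sqrt 2 * real CARD('m) / real N ^ p"
proof (cases "N = 1 \<or> p = 0")
  case True
  have "1 * 1 \<le> sqrt 2 * real CARD('m)"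
    by (intro mult_mono) auto
  moreover have "real N ^ p = 1"
    using True by auto
  ultimately have "1 - sqrt 2 * real CARD('m) / real N ^ p \<le> 0"
    by simp
  then show ?thesis
    by (rule order_trans[OF _ measure_nonneg])
next
  case False
  define M where "M = (MAX j\<in>{1..N}. norm (Y j))"
  have M: "norm (Y j) \<le> M" if "j \<in> {1..N}" for j
    unfolding M_def using that by (intro Max_ge) auto
  have "0 < norm (Y 1)"
    using assms(2,3) by simp
  also have "norm (Y 1) \<le> M"
    using assms(2) by (intro M) simp
  finally have "M > 0" .
  from False have "N \<ge> 2" and "p \<ge> 1"
    using assms(2) by auto
  have "real N ^ 1 \<le> real N ^ p"
    using \<open>N \<ge> 2\<close> \<open>p \<ge> 1\<close> by (intro power_increasing) auto
  then have "real N ^ p \<ge> 2"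
    using \<open>N \<ge> 2\<close> unfolding power_one_right by linarith
  then have "2 * exp (- (4 * pi * ln (real N ^ p))) \<le> sqrt 2 / real N ^ p"
    by (rule two_exp_neg_four_pi_ln_le)
  then have "2 * real CARD('m) * exp (- (4 * pi * real p * ln (real N)))
      \<le> sqrt 2 * real CARD('m) / real N ^ p"
    using mult_left_mono[of _ _ "real CARD('m)"] \<open>N \<ge> 2\<close> by (fastforce simp: ln_realpow ac_simps)
  moreover have "1 - 2 * real CARD('m) * exp (- (4 * pi * real p * ln (real N)))
      \<le> measure_pmf.prob (phase2 \<delta> Y w N)
           {u. norm u \<le> \<delta> * sqrt (4 * pi * real p * ln (real N) * CARD('m) / 2) * M}"
    using \<open>M > 0\<close> \<open>N \<ge> 2\<close> \<open>p \<ge> 1\<close> by (intro prob_phase2_norm_le assms(1,3) M) auto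
  ultimately show ?thesis
    unfolding M_def by (simp add: ac_simps)
qed

end
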